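(* Let $\mathcal X,\mathcal Y$ be complex Hilbert spaces and $A:\mathcal X\supset\operatorname{dom}A\to\mathcal Y$ a closed, densely defined linear operator with $\|Ax\|_{\mathcal Y}\ge c\|x\|_{\mathcal X}$ for some $c>0$ and all $x\in\operatorname{dom}A$. Let $\mathcal X_h$ denote $\operatorname{dom}A$ with inner product $\langle x,y\rangle_{\mathcal X_h}=\langle Ax,Ay\rangle_{\mathcal Y}$, and $\mathcal Z_h:=\mathcal X_h\times\mathcal X$ with the product inner product. Let $B:\mathcal Y\supset\operatorname{dom}B\to\mathcal X$ be closed, densely defined, with $A^*\subset-B$. Define $\mathcal A:\mathcal Z_h\supset\operatorname{dom}\mathcal A\to\mathcal Z_h$ by $\operatorname{dom}\mathcal A=\{(z_1,z_2)\in\mathcal X_h\times\mathcal X_h:\ Az_1\in\operatorname{dom}B\}$, $\mathcal A(z_1,z_2)=(z_2,\,BAz_1)$, and $\mathcal A_{\mathrm s}:\mathcal Z_h\supset\operatorname{dom}\mathcal A_{\mathrm s}\to\mathcal Z_h$ by $\operatorname{dom}\mathcal A_{\mathrm s}=\{(z_1,z_2)\in\mathcal X_h\times\mathcal X_h:\ z_1\in\operatorname{dom}(A^*A)\}$, $\mathcal A_{\mathrm s}(z_1,z_2)=(z_2,\,-A^*Az_1)$. Then $\mathcal A$ is densely defined and closed in $\mathcal Z_h$, $\mathcal A_{\mathrm s}\subset\mathcal A$, and $\mathcal A^*\subset-\mathcal A$ (adjoint taken in $\mathcal Z_h$).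
   Context: $\mathcal X_h$ is a Hilbert space (its norm equals $\|(A^*A)^{1/2}\cdot\|_{\mathcal X}$). For operators, $T_1\subset T_2$ means $T_2$ extends $T_1$. The domain of $\mathcal A_{\mathrm s}$ is equivalently the set of $(z_1,z_2)\in\mathcal X_h\times\mathcal X_h$ for which the functional $y\mapsto\langle Az_1,Ay\rangle_{\mathcal Y}$ on $\mathcal X_h$ is represented by an element of $\mathcal X$ (i.e. $Sz_1\in\mathcal X$ for the extension $S:\mathcal X_h\to\mathcal X_h^*$ of $A^*A$). *)

theory Defs
  imports "HOL-Analysis.Analysis"
begin

text \<open>Complex vector spaces are represented by a type of class ab_group_add together with
 an explicit complex scalar multiplication sm.  Inner products are explicit functions
 ip (linear in the first, conjugate linear in the second argument) on a carrier set S,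
 so that spaces such as X_h = (dom A, <A.,A.>) can be handled uniformly.\<close>

definition cvector_space :: "(complex \<Rightarrow> 'a::ab_group_add \<Rightarrow> 'a) \<Rightarrow> bool" where
  "cvector_space sm \<longleftrightarrow>
     (\<forall>a x y. sm a (x + y) = sm a x + sm a y) \<and>
     (\<forall>a b x. sm (a + b) x = sm a x + sm b x) \<and>
     (\<forall>a b x. sm a (sm b x) = sm (a * b) x) \<and>
     (\<forall>x. sm 1 x = x)"

definition csubspace :: "(complex \<Rightarrow> 'a::ab_group_add \<Rightarrow> 'a) \<Rightarrow> 'a set \<Rightarrow> bool" where
  "csubspace sm S \<longleftrightarrow> 0 \<in> S \<and> (\<forall>x\<in>S. \<forall>y\<in>S. x + y \<in> S) \<and> (\<forall>a. \<forall>x\<in>S. sm a x \<in> S)"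

definition inner_product_on ::
  "(complex \<Rightarrow> 'a::ab_group_add \<Rightarrow> 'a) \<Rightarrow> 'a set \<Rightarrow> ('a \<Rightarrow> 'a \<Rightarrow> complex) \<Rightarrow> bool" where
  "inner_product_on sm S ip \<longleftrightarrow> csubspace sm S \<and>
     (\<forall>x\<in>S. \<forall>y\<in>S. ip x y = cnj (ip y x)) \<and>
     (\<forall>x\<in>S. \<forall>y\<in>S. \<forall>z\<in>S. ip (x + y) z = ip x z + ip y z) \<and>
     (\<forall>a. \<forall>x\<in>S. \<forall>y\<in>S. ip (sm a x) y = a * ip x y) \<and>
     (\<forall>x\<in>S. 0 \<le> Re (ip x x)) \<and>
     (\<forall>x\<in>S. ip x x = 0 \<longrightarrow> x = 0)"

definition ipnorm :: "('a \<Rightarrow> 'a \<Rightarrow> complex) \<Rightarrow> 'a \<Rightarrow> real" where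
  "ipnorm ip x = sqrt (Re (ip x x))"

definition ip_conv :: "('a::ab_group_add \<Rightarrow> 'a \<Rightarrow> complex) \<Rightarrow> (nat \<Rightarrow> 'a) \<Rightarrow> 'a \<Rightarrow> bool" where
  "ip_conv ip f l \<longleftrightarrow> (\<forall>e>0. \<exists>N. \<forall>n\<ge>N. ipnorm ip (f n - l) < e)"

definition ip_cauchy :: "('a::ab_group_add \<Rightarrow> 'a \<Rightarrow> complex) \<Rightarrow> (nat \<Rightarrow> 'a) \<Rightarrow> bool" where
  "ip_cauchy ip f \<longleftrightarrow> (\<forall>e>0. \<exists>N. \<forall>m\<ge>N. \<forall>n\<ge>N. ipnorm ip (f m - f n) < e)"

definition hilbert_space ::
  "(complex \<Rightarrow> 'a::ab_group_add \<Rightarrow> 'a) \<Rightarrow> 'a set \<Rightarrow> ('a \<Rightarrow> 'a \<Rightarrow> complex) \<Rightarrow> bool" where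
  "hilbert_space sm S ip \<longleftrightarrow> cvector_space sm \<and> inner_product_on sm S ip \<and>
     (\<forall>f. (\<forall>n. f n \<in> S) \<and> ip_cauchy ip f \<longrightarrow> (\<exists>l\<in>S. ip_conv ip f l))"

definition linear_operator ::
  "(complex \<Rightarrow> 'a::ab_group_add \<Rightarrow> 'a) \<Rightarrow> 'a set \<Rightarrow> (complex \<Rightarrow> 'b::ab_group_add \<Rightarrow> 'b) \<Rightarrow> 'b set
    \<Rightarrow> 'a set \<Rightarrow> ('a \<Rightarrow> 'b) \<Rightarrow> bool" where
  "linear_operator sm S sm' S' D T \<longleftrightarrow> D \<subseteq> S \<and> csubspace sm D \<and> (\<forall>x\<in>D. T x \<in> S') \<and>
     (\<forall>x\<in>D. \<forall>y\<in>D. T (x + y) = T x + T y) \<and> (\<forall>a. \<forall>x\<in>D. T (sm a x) = sm' a (T x))"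

definition densely_defined :: "'a set \<Rightarrow> ('a::ab_group_add \<Rightarrow> 'a \<Rightarrow> complex) \<Rightarrow> 'a set \<Rightarrow> bool" where
  "densely_defined S ip D \<longleftrightarrow> D \<subseteq> S \<and> (\<forall>x\<in>S. \<forall>e>0. \<exists>d\<in>D. ipnorm ip (x - d) < e)"

definition closed_operator ::
  "'a set \<Rightarrow> ('a::ab_group_add \<Rightarrow> 'a \<Rightarrow> complex) \<Rightarrow> 'b set \<Rightarrow> ('b::ab_group_add \<Rightarrow> 'b \<Rightarrow> complex)
    \<Rightarrow> 'a set \<Rightarrow> ('a \<Rightarrow> 'b) \<Rightarrow> bool" where
  "closed_operator S ip S' ip' D T \<longleftrightarrow>
     (\<forall>f x y. (\<forall>n. f n \<in> D) \<and> x \<in> S \<and> y \<in> S' \<and> ip_conv ip f x \<and> ip_conv ip' (\<lambda>n. T (f n)) y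
        \<longrightarrow> x \<in> D \<and> T x = y)"

definition adj_dom ::
  "'a set \<Rightarrow> ('a \<Rightarrow> 'a \<Rightarrow> complex) \<Rightarrow> 'b set \<Rightarrow> ('b \<Rightarrow> 'b \<Rightarrow> complex)
    \<Rightarrow> 'a set \<Rightarrow> ('a \<Rightarrow> 'b) \<Rightarrow> 'b set" where
  "adj_dom S ip S' ip' D T = {y\<in>S'. \<exists>z\<in>S. \<forall>x\<in>D. ip' (T x) y = ip x z}"

definition adj_fun ::
  "'a set \<Rightarrow> ('a \<Rightarrow> 'a \<Rightarrow> complex) \<Rightarrow> 'b set \<Rightarrow> ('b \<Rightarrow> 'b \<Rightarrow> complex)
    \<Rightarrow> 'a set \<Rightarrow> ('a \<Rightarrow> 'b) \<Rightarrow> 'b \<Rightarrow> 'a" where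
  "adj_fun S ip S' ip' D T y = (THE z. z \<in> S \<and> (\<forall>x\<in>D. ip' (T x) y = ip x z))"

definition op_incl :: "'a set \<Rightarrow> ('a \<Rightarrow> 'b) \<Rightarrow> 'a set \<Rightarrow> ('a \<Rightarrow> 'b) \<Rightarrow> bool" where
  "op_incl D1 T1 D2 T2 \<longleftrightarrow> D1 \<subseteq> D2 \<and> (\<forall>x\<in>D1. T1 x = T2 x)"

end

theory Submission
  imports Defs
begin

(* Coercivity and closedness of A make the energy space X_h complete.  The Riesz representation
   theorem in X_h together with the inclusion of A^* in -B then gives, for every u in X, some r in
   dom A with A r in dom B and B A r = -u.  Testing an element of X_h that is orthogonal to
   D = {x in dom A. A x in dom B} against such an r shows that D is dense in X_h, so
   dom cA = D x dom A is dense in Z_h.  Closedness of cA follows componentwise from closedness of B,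
   because convergence in X_h implies convergence in X.  If (w, v) lies in the graph of the adjoint
   of cA, testing against (0, x) gives A w1 in dom B with B A w1 = -v2, and testing against (r, 0),
   where B A r = -(w2 + v1), gives w2 + v1 = 0; hence w is in dom cA and v = -cA w. *)

lemma cvector_space_scale_zero:
  assumes "cvector_space sm"
  shows "sm 0 x = 0"
proof -
  have "sm 0 x = sm 0 x + sm 0 x"
    using assms unfolding cvector_space_def by (metis add_0)
  then show ?thesis by simp
qed

lemma cvector_space_scale_minus_one:
  assumes "cvector_space sm"
  shows "sm (- 1) x = - x"
proof -
  have "sm (- 1) x + x = sm 0 x"
    using assms unfolding cvector_space_def by (metis add.left_inverse)
  then show ?thesis
    using cvector_space_scale_zero[OF assms] by (simp add: add_eq_0_iff2)
qed

lemma csubspace_diff: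
  assumes "cvector_space sm" "csubspace sm D" "x \<in> D" "y \<in> D"
  shows "x - y \<in> D"
  using assms cvector_space_scale_minus_one[OF assms(1), of y]
  unfolding csubspace_def by (metis diff_conv_add_uminus)

lemma linear_operator_zero:
  assumes "linear_operator sm S sm' S' D T"
  shows "T 0 = 0"
proof -
  have "T 0 = T 0 + T 0"
    using assms unfolding linear_operator_def csubspace_def by (metis add_0)
  then show ?thesis by simp
qed

lemma linear_operator_diff:
  assumes "cvector_space sm" "linear_operator sm S sm' S' D T" "x \<in> D" "y \<in> D"
  shows "T (x - y) = T x - T y"
proof -
  have "x - y \<in> D"
    using assms csubspace_diff[of sm D x y] unfolding linear_operator_def by blast
  then have "T (x - y) + T y = T x"
    using assms(2,4) unfolding linear_operator_def by (metis diff_add_cancel)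
  then show ?thesis by (simp add: eq_diff_eq)
qed

lemma complex_eq_0_if_quadratic_nonneg:
  fixes w :: complex and q :: real
  assumes "\<And>t. 0 \<le> 2 * Re (t * w) + cmod t ^ 2 * q"
  shows "w = 0"
proof (rule ccontr)
  assume "w \<noteq> 0"
  then have w_pos: "cmod w ^ 2 > 0"
    by simp
  define s where "s = 1 / (\<bar>q\<bar> + 1)"
  have s_pos: "s > 0" and sq: "s * q < 1"
    unfolding s_def by (auto simp: field_simps)
  have "Re (- of_real s * cnj w * w) = - s * cmod w ^ 2"
    using cmod_power2[of w] by (simp add: power2_eq_square algebra_simps)
  moreover have "cmod (- of_real s * cnj w) ^ 2 = s ^ 2 * cmod w ^ 2"
    using s_pos by (simp add: norm_mult power_mult_distrib)
  ultimately have "0 \<le> s * cmod w ^ 2 * (s * q - 2)"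
    using assms[of "- of_real s * cnj w"] by (simp add: algebra_simps power2_eq_square)
  moreover have "s * cmod w ^ 2 * (s * q - 2) < 0"
    using s_pos w_pos sq by (intro mult_pos_neg) auto
  ultimately show False
    by linarith
qed

lemma ip_conv_dominated:
  assumes "ip_conv ip1 f l" "\<And>n. ipnorm ip2 (f n - l) \<le> K * ipnorm ip1 (f n - l)" "K > 0"
  shows "ip_conv ip2 f l"
  unfolding ip_conv_def
proof (intro allI impI)
  fix e :: real
  assume "e > 0"
  then obtain N where N: "\<forall>n\<ge>N. ipnorm ip1 (f n - l) < e / K"
    using assms(1,3) unfolding ip_conv_def by (meson divide_pos_pos)
  have "ipnorm ip2 (f n - l) < e" if "n \<ge> N" for n
  proof -
    have "K * ipnorm ip1 (f n - l) < K * (e / K)"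
      using N that assms(3) by (intro mult_strict_left_mono) auto
    then show ?thesis
      using assms(2)[of n] assms(3) by simp
  qed
  then show "\<exists>N. \<forall>n\<ge>N. ipnorm ip2 (f n - l) < e"
    by blast
qed

lemma ip_cauchy_dominated:
  assumes "ip_cauchy ip1 f" "\<And>m n. ipnorm ip2 (f m - f n) \<le> K * ipnorm ip1 (f m - f n)" "K > 0"
  shows "ip_cauchy ip2 f"
  unfolding ip_cauchy_def
proof (intro allI impI)
  fix e :: real
  assume "e > 0"
  then obtain N where N: "\<forall>m\<ge>N. \<forall>n\<ge>N. ipnorm ip1 (f m - f n) < e / K"
    using assms(1,3) unfolding ip_cauchy_def by (meson divide_pos_pos)
  have "ipnorm ip2 (f m - f n) < e" if "m \<ge> N" "n \<ge> N" for m n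
  proof -
    have "K * ipnorm ip1 (f m - f n) < K * (e / K)"
      using N that assms(3) by (intro mult_strict_left_mono) auto
    then show ?thesis
      using assms(2)[of m n] assms(3) by simp
  qed
  then show "\<exists>N. \<forall>m\<ge>N. \<forall>n\<ge>N. ipnorm ip2 (f m - f n) < e"
    by blast
qed

locale ip_space =
  fixes sm :: "complex \<Rightarrow> 'a::ab_group_add \<Rightarrow> 'a" and S :: "'a set" and ip :: "'a \<Rightarrow> 'a \<Rightarrow> complex"
  assumes cvector_space: "cvector_space sm" and inner_product: "inner_product_on sm S ip"
begin

abbreviation nrm :: "'a \<Rightarrow> real" where "nrm \<equiv> ipnorm ip"

lemma csubspace_carrier: "csubspace sm S"
  using inner_product unfolding inner_product_on_def by blast

lemma zero_mem [simp]: "0 \<in> S"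
  and add_mem [simp]: "x \<in> S \<Longrightarrow> y \<in> S \<Longrightarrow> x + y \<in> S"
  and scale_mem [simp]: "x \<in> S \<Longrightarrow> sm a x \<in> S"
  using csubspace_carrier unfolding csubspace_def by blast+

lemma diff_mem [simp]: "x \<in> S \<Longrightarrow> y \<in> S \<Longrightarrow> x - y \<in> S"
  using csubspace_diff[OF cvector_space csubspace_carrier] .

lemma minus_mem [simp]: "x \<in> S \<Longrightarrow> - x \<in> S"
  using diff_mem[of 0 x] by simp

lemma ip_conj: "x \<in> S \<Longrightarrow> y \<in> S \<Longrightarrow> ip x y = cnj (ip y x)"
  using inner_product unfolding inner_product_on_def by (elim conjE) blast

lemma ip_add_left: "x \<in> S \<Longrightarrow> y \<in> S \<Longrightarrow> z \<in> S \<Longrightarrow> ip (x + y) z = ip x z + ip y z"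
  using inner_product unfolding inner_product_on_def by (elim conjE) blast

lemma ip_scale_left: "x \<in> S \<Longrightarrow> y \<in> S \<Longrightarrow> ip (sm a x) y = a * ip x y"
  using inner_product unfolding inner_product_on_def by (elim conjE) blast

lemma ip_self_nonneg: "x \<in> S \<Longrightarrow> 0 \<le> Re (ip x x)"
  using inner_product unfolding inner_product_on_def by (elim conjE) blast

lemma ip_self_eq_0_imp: "x \<in> S \<Longrightarrow> ip x x = 0 \<Longrightarrow> x = 0"
  using inner_product unfolding inner_product_on_def by (elim conjE) blast

lemma ip_add_right:
  assumes "x \<in> S" "y \<in> S" "z \<in> S"
  shows "ip x (y + z) = ip x y + ip x z"
proof -
  have "ip x (y + z) = cnj (ip (y + z) x)" using assms by (intro ip_conj) simp_all
  also have "\<dots> = cnj (ip y x) + cnj (ip z x)" using assms by (simp add: ip_add_left)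
  finally show ?thesis using assms by (simp add: ip_conj[of x y] ip_conj[of x z])
qed

lemma ip_scale_right:
  assumes "x \<in> S" "y \<in> S"
  shows "ip x (sm a y) = cnj a * ip x y"
proof -
  have "ip x (sm a y) = cnj (ip (sm a y) x)" using assms by (intro ip_conj) simp_all
  then show ?thesis using assms by (simp add: ip_scale_left ip_conj[of x y])
qed

lemma ip_minus_left: "x \<in> S \<Longrightarrow> y \<in> S \<Longrightarrow> ip (- x) y = - ip x y"
  using ip_scale_left[of x y "- 1"] by (simp add: cvector_space_scale_minus_one[OF cvector_space])

lemma ip_minus_right: "x \<in> S \<Longrightarrow> y \<in> S \<Longrightarrow> ip x (- y) = - ip x y"
  using ip_scale_right[of x y "- 1"] by (simp add: cvector_space_scale_minus_one[OF cvector_space])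

lemma ip_diff_left: "x \<in> S \<Longrightarrow> y \<in> S \<Longrightarrow> z \<in> S \<Longrightarrow> ip (x - y) z = ip x z - ip y z"
  using ip_add_left[of x "- y" z] by (simp add: ip_minus_left)

lemma ip_diff_right: "x \<in> S \<Longrightarrow> y \<in> S \<Longrightarrow> z \<in> S \<Longrightarrow> ip x (y - z) = ip x y - ip x z"
  using ip_add_right[of x y "- z"] by (simp add: ip_minus_right)

lemma ip_zero_left [simp]: "y \<in> S \<Longrightarrow> ip 0 y = 0"
  using ip_diff_left[of 0 0 y] by simp

lemma ip_zero_right [simp]: "y \<in> S \<Longrightarrow> ip y 0 = 0"
  using ip_diff_right[of y 0 0] by simp

lemma nrm_nonneg: "x \<in> S \<Longrightarrow> 0 \<le> nrm x"
  using ip_self_nonneg by (simp add: ipnorm_def)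

lemma nrm_square: "x \<in> S \<Longrightarrow> nrm x ^ 2 = Re (ip x x)"
  using ip_self_nonneg by (simp add: ipnorm_def)

lemma ip_self: "x \<in> S \<Longrightarrow> ip x x = of_real (nrm x ^ 2)"
  using ip_conj[of x x] by (simp add: nrm_square complex_eq_iff)

lemma nrm_eq_0_iff: "x \<in> S \<Longrightarrow> nrm x = 0 \<longleftrightarrow> x = 0"
  using ip_self ip_self_eq_0_imp by fastforce

lemma nrm_minus_commute: "x \<in> S \<Longrightarrow> y \<in> S \<Longrightarrow> nrm (x - y) = nrm (y - x)"
  using ip_minus_left[of "y - x"] ip_minus_right[of _ "y - x"] by (simp add: ipnorm_def)

lemma nrm_ip_add:
  assumes "x \<in> S" "y \<in> S"
  shows "nrm (x + y) ^ 2 = nrm x ^ 2 + nrm y ^ 2 + 2 * Re (ip x y)"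
  using assms by (simp add: nrm_square ip_add_left ip_add_right ip_conj[of y x])

lemma nrm_scale_add:
  assumes "x \<in> S" "u \<in> S"
  shows "nrm (x + sm t u) ^ 2 = nrm x ^ 2 + 2 * Re (t * ip u x) + cmod t ^ 2 * nrm u ^ 2"
proof -
  have "ip x (sm t u) = cnj (t * ip u x)"
    using assms by (simp add: ip_scale_right ip_conj[of x u])
  moreover have "ip (sm t u) (sm t u) = of_real (cmod t ^ 2) * ip u u"
    using assms complex_norm_square[of t]
    by (simp add: ip_scale_left ip_scale_right mult.assoc mult.commute[of "cnj t"])
  ultimately show ?thesis
    using assms nrm_ip_add[of x "sm t u"] by (simp add: nrm_square)
qed

lemma cauchy_schwarz:
  assumes "x \<in> S" "y \<in> S"
  shows "cmod (ip x y) \<le> nrm x * nrm y"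
proof (cases "y = 0")
  case False
  then have y_pos: "nrm y > 0"
    using assms nrm_eq_0_iff nrm_nonneg by (simp add: order_le_neq_trans)
  define t where "t = - ip x y / of_real (nrm y ^ 2)"
  have "ip x y * ip y x = of_real (cmod (ip x y) ^ 2)"
    using assms complex_norm_square[of "ip x y"] by (simp add: ip_conj[of y x])
  then have "Re (t * ip y x) = - (cmod (ip x y) ^ 2) / nrm y ^ 2"
    unfolding t_def by (simp add: Re_divide_of_real)
  moreover have "cmod t ^ 2 * nrm y ^ 2 = cmod (ip x y) ^ 2 / nrm y ^ 2"
  proof -
    have "cmod t = cmod (ip x y) / nrm y ^ 2"
      unfolding t_def by (simp add: norm_divide norm_power)
    then show ?thesis
      using y_pos by (simp add: power_divide power2_eq_square)
  qed
  ultimately have "cmod (ip x y) ^ 2 / nrm y ^ 2 \<le> nrm x ^ 2"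
    using nrm_scale_add[OF assms, of t] zero_le_power2[of "nrm (x + sm t y)"] by linarith
  then have "cmod (ip x y) ^ 2 \<le> (nrm x * nrm y) ^ 2"
    using y_pos by (simp add: divide_le_eq power_mult_distrib)
  then show ?thesis
    by (rule power2_le_imp_le) (simp add: assms nrm_nonneg)
qed (use assms in \<open>simp add: nrm_nonneg\<close>)

lemma nrm_triangle:
  assumes "x \<in> S" "y \<in> S"
  shows "nrm (x + y) \<le> nrm x + nrm y"
proof -
  have "nrm (x + y) ^ 2 \<le> (nrm x + nrm y) ^ 2"
    using nrm_ip_add[OF assms] cauchy_schwarz[OF assms] complex_Re_le_cmod[of "ip x y"]
    by (simp add: power2_sum)
  then show ?thesis
    by (rule power2_le_imp_le) (simp add: assms nrm_nonneg)
qed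

lemma ip_conv_iff_tendsto:
  assumes "\<And>n. f n \<in> S" "l \<in> S"
  shows "ip_conv ip f l \<longleftrightarrow> (\<lambda>n. nrm (f n - l)) \<longlonglongrightarrow> 0"
  using assms by (simp add: ip_conv_def LIMSEQ_iff nrm_nonneg)

lemma ip_conv_unique:
  assumes "\<And>n. f n \<in> S" "a \<in> S" "b \<in> S" "ip_conv ip f a" "ip_conv ip f b"
  shows "a = b"
proof -
  have lim: "(\<lambda>n. nrm (f n - a) + nrm (f n - b)) \<longlonglongrightarrow> 0"
    using assms tendsto_add[of _ 0 _ _ 0] by (simp add: ip_conv_iff_tendsto)
  have "nrm (a - b) \<le> nrm (f n - a) + nrm (f n - b)" for n
    using nrm_triangle[of "a - f n" "f n - b"] assms nrm_minus_commute[of a "f n"] by simp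
  then have "nrm (a - b) \<le> 0"
    by (intro LIMSEQ_le_const[OF lim]) simp
  then show ?thesis
    using assms nrm_nonneg[of "a - b"] nrm_eq_0_iff[of "a - b"] by simp
qed

lemma ip_conv_imp_tendsto_ip:
  assumes "\<And>n. f n \<in> S" "l \<in> S" "u \<in> S" "ip_conv ip f l"
  shows "(\<lambda>n. ip u (f n)) \<longlonglongrightarrow> ip u l"
proof (rule LIM_zero_cancel, rule Lim_null_comparison)
  show "\<forall>\<^sub>F n in sequentially. norm (ip u (f n) - ip u l) \<le> nrm u * nrm (f n - l)"
    using assms cauchy_schwarz[of u "f _ - l"] by (simp add: ip_diff_right)
  show "(\<lambda>n. nrm u * nrm (f n - l)) \<longlonglongrightarrow> 0"
    using assms tendsto_mult_right_zero by (simp add: ip_conv_iff_tendsto)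
qed

lemma ip_cauchy_if_square_bound:
  assumes "a \<longlonglongrightarrow> 0" "\<And>p q. nrm (f p - f q) ^ 2 \<le> a p + a q"
  shows "ip_cauchy ip f"
  unfolding ip_cauchy_def
proof (intro allI impI)
  fix e :: real
  assume "e > 0"
  then have "e ^ 2 / 2 > 0"
    by simp
  then obtain M where M: "\<forall>n\<ge>M. norm (a n - 0) < e ^ 2 / 2"
    using LIMSEQ_D[OF assms(1)] by blast
  have "nrm (f p - f q) < e" if "p \<ge> M" "q \<ge> M" for p q
  proof -
    have "a p < e ^ 2 / 2" "a q < e ^ 2 / 2"
      using M that by (auto simp: abs_less_iff)
    then have "nrm (f p - f q) ^ 2 < e ^ 2"
      using assms(2)[of p q] by linarith
    then show ?thesis
      using \<open>e > 0\<close> by (simp add: power_less_imp_less_base)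
  qed
  then show "\<exists>M. \<forall>p\<ge>M. \<forall>q\<ge>M. nrm (f p - f q) < e"
    by blast
qed

lemma orthogonal_to_dense_eq_0:
  assumes "densely_defined S ip D" "w \<in> S" "\<forall>d\<in>D. ip d w = 0"
  shows "w = 0"
proof (rule ccontr)
  assume "w \<noteq> 0"
  then have pos: "nrm w > 0"
    using assms(2) nrm_eq_0_iff nrm_nonneg by (simp add: order_le_neq_trans)
  then obtain d where d: "d \<in> D" "nrm (w - d) < nrm w / 2"
    using assms(1,2) unfolding densely_defined_def by (meson half_gt_zero)
  have dS: "d \<in> S"
    using d(1) assms(1) unfolding densely_defined_def by blast
  have "nrm w ^ 2 = Re (ip (w - d) w)"
    using assms(2,3) d(1) dS by (simp add: nrm_square ip_diff_left)
  also have "\<dots> \<le> nrm (w - d) * nrm w"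
    using cauchy_schwarz[of "w - d" w] complex_Re_le_cmod assms(2) dS by (meson diff_mem order_trans)
  also have "\<dots> \<le> nrm w / 2 * nrm w"
    using d(2) pos by (intro mult_right_mono) auto
  finally show False
    using pos by (simp add: power2_eq_square)
qed

lemma adj_fun_eqI:
  assumes "densely_defined S ip D" "z \<in> S" "\<forall>x\<in>D. ip' (T x) y = ip x z"
  shows "adj_fun S ip S' ip' D T y = z"
  unfolding adj_fun_def
proof (rule the_equality)
  show "z \<in> S \<and> (\<forall>x\<in>D. ip' (T x) y = ip x z)"
    using assms(2,3) by blast
  fix z'
  assume z': "z' \<in> S \<and> (\<forall>x\<in>D. ip' (T x) y = ip x z')"
  have "D \<subseteq> S"
    using assms(1) unfolding densely_defined_def by blast
  then have "\<forall>d\<in>D. ip d (z' - z) = 0"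
    using assms(2,3) z' by (auto simp: ip_diff_right)
  then have "z' - z = 0"
    using orthogonal_to_dense_eq_0[OF assms(1), of "z' - z"] assms(2) z' by simp
  then show "z' = z"
    by simp
qed

subsection \<open>The Dirichlet principle\<close>

definition linear_functional :: "('a \<Rightarrow> complex) \<Rightarrow> bool" where
  "linear_functional \<phi> \<longleftrightarrow>
     (\<forall>x\<in>S. \<forall>y\<in>S. \<phi> (x + y) = \<phi> x + \<phi> y) \<and> (\<forall>a. \<forall>x\<in>S. \<phi> (sm a x) = a * \<phi> x)"

lemma linear_functional_ip_left: "y \<in> S \<Longrightarrow> linear_functional (\<lambda>x. ip x y)"
  by (simp add: linear_functional_def ip_add_left ip_scale_left)

(* Minimising sequences of this functional over a subspace D0 converge to an element representing
   \<phi> on D0; this replaces the projection theorem. *)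
definition dirichlet :: "('a \<Rightarrow> complex) \<Rightarrow> 'a \<Rightarrow> real" where
  "dirichlet \<phi> y = nrm y ^ 2 - 2 * Re (\<phi> y)"

lemma dirichlet_perturb:
  assumes "linear_functional \<phi>" "a \<in> S" "u \<in> S"
  shows "dirichlet \<phi> (a + sm t u)
    = dirichlet \<phi> a + 2 * Re (t * (ip u a - \<phi> u)) + cmod t ^ 2 * nrm u ^ 2"
proof -
  have "\<phi> (a + sm t u) = \<phi> a + t * \<phi> u"
    using assms unfolding linear_functional_def by simp
  then show ?thesis
    using assms(2,3) unfolding dirichlet_def nrm_scale_add[OF assms(2,3)]
    by (simp add: algebra_simps)
qed

lemma dirichlet_midpoint:
  assumes "linear_functional \<phi>" "a \<in> S" "b \<in> S"
  shows "nrm (a - b) ^ 2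
    = 2 * dirichlet \<phi> a + 2 * dirichlet \<phi> b - 4 * dirichlet \<phi> (sm (1 / 2) (a + b))"
proof -
  have "\<phi> (sm (1 / 2) (a + b)) = (\<phi> a + \<phi> b) / 2"
    using assms unfolding linear_functional_def by simp
  then have "Re (\<phi> (sm (1 / 2) (a + b))) = (Re (\<phi> a) + Re (\<phi> b)) / 2"
    by (simp only: Re_divide_numeral plus_complex.sel)
  moreover have "Re (ip a b) = Re (ip b a)"
    using assms ip_conj[of a b] by simp
  ultimately show ?thesis
    using assms unfolding dirichlet_def
    by (simp add: nrm_square ip_add_left ip_add_right ip_diff_left ip_diff_right
        ip_scale_left ip_scale_right algebra_simps)
qed

lemma minimizing_sequence_exists:
  assumes "\<And>x. x \<in> S \<Longrightarrow> cmod (\<phi> x) \<le> K * nrm x" "D0 \<subseteq> S" "D0 \<noteq> {}"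
  obtains \<mu> d where "\<And>x. x \<in> D0 \<Longrightarrow> \<mu> \<le> dirichlet \<phi> x"
    "\<And>n. d n \<in> D0" "\<And>n. dirichlet \<phi> (d n) < \<mu> + inverse (Suc n)"
proof -
  have "- (K ^ 2) \<le> dirichlet \<phi> y" if "y \<in> S" for y
  proof -
    have "Re (\<phi> y) \<le> K * nrm y"
      using assms(1)[OF that] complex_Re_le_cmod order_trans by blast
    then show ?thesis
      unfolding dirichlet_def using zero_le_power2[of "nrm y - K"]
      by (simp add: power2_diff algebra_simps)
  qed
  then have bdd: "bdd_below (dirichlet \<phi> ` D0)"
    using assms(2) by (meson bdd_belowI2 subsetD)
  define \<mu> where "\<mu> = Inf (dirichlet \<phi> ` D0)"
  have "\<exists>d\<in>D0. dirichlet \<phi> d < \<mu> + inverse (Suc n)" for n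
    using cInf_less_iff[OF _ bdd, of "\<mu> + inverse (Suc n)"] assms(3) unfolding \<mu>_def by auto
  then obtain d where "\<And>n. d n \<in> D0" "\<And>n. dirichlet \<phi> (d n) < \<mu> + inverse (Suc n)"
    by metis
  moreover have "\<mu> \<le> dirichlet \<phi> x" if "x \<in> D0" for x
    unfolding \<mu>_def using bdd that by (simp add: cInf_lower)
  ultimately show thesis
    using that by blast
qed

lemma minimizing_sequence_cauchy:
  assumes "linear_functional \<phi>" "D0 \<subseteq> S" "csubspace sm D0"
    and "\<And>d. d \<in> D0 \<Longrightarrow> \<mu> \<le> dirichlet \<phi> d"
    and "\<And>n. d n \<in> D0" "\<And>n. dirichlet \<phi> (d n) < \<mu> + inverse (Suc n)"
  shows "ip_cauchy ip d"
proof (rule ip_cauchy_if_square_bound)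
  show "(\<lambda>n. 2 * inverse (real (Suc n))) \<longlonglongrightarrow> 0"
    using tendsto_mult_right_zero[OF LIMSEQ_inverse_real_of_nat] by simp
  fix p q
  have "sm (1 / 2) (d p + d q) \<in> D0"
    using assms(3,5) unfolding csubspace_def by blast
  then have "\<mu> \<le> dirichlet \<phi> (sm (1 / 2) (d p + d q))"
    using assms(4) by blast
  moreover have "d p \<in> S" "d q \<in> S"
    using assms(2,5) by auto
  ultimately show "nrm (d p - d q) ^ 2 \<le> 2 * inverse (real (Suc p)) + 2 * inverse (real (Suc q))"
    using dirichlet_midpoint[OF assms(1), of "d p" "d q"] assms(6)[of p] assms(6)[of q] by simp
qed

lemma minimizer_represents:
  assumes "linear_functional \<phi>" "D0 \<subseteq> S" "csubspace sm D0"
    and "\<And>d. d \<in> D0 \<Longrightarrow> \<mu> \<le> dirichlet \<phi> d"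
    and "\<And>n. d n \<in> D0" "(\<lambda>n. dirichlet \<phi> (d n)) \<longlonglongrightarrow> \<mu>"
    and "m \<in> S" "ip_conv ip d m" "u \<in> D0"
  shows "ip u m = \<phi> u"
proof -
  have dS: "d n \<in> S" and uS: "u \<in> S" for n
    using assms(2,5,9) by auto
  have "0 \<le> 2 * Re (t * (ip u m - \<phi> u)) + cmod t ^ 2 * nrm u ^ 2" for t
  proof -
    have lim: "(\<lambda>n. dirichlet \<phi> (d n + sm t u))
      \<longlonglongrightarrow> \<mu> + 2 * Re (t * (ip u m - \<phi> u)) + cmod t ^ 2 * nrm u ^ 2"
      unfolding dirichlet_perturb[OF assms(1) dS uS]
      by (intro tendsto_intros assms(6) ip_conv_imp_tendsto_ip dS uS assms(7,8))
    have "\<mu> \<le> dirichlet \<phi> (d n + sm t u)" for n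
      using assms(3,4,5,9) unfolding csubspace_def by blast
    then have "\<mu> \<le> \<mu> + 2 * Re (t * (ip u m - \<phi> u)) + cmod t ^ 2 * nrm u ^ 2"
      by (intro LIMSEQ_le_const[OF lim]) simp
    then show ?thesis
      by linarith
  qed
  then show ?thesis
    using complex_eq_0_if_quadratic_nonneg by fastforce
qed

end

locale hilbert =
  fixes sm :: "complex \<Rightarrow> 'a::ab_group_add \<Rightarrow> 'a" and S :: "'a set" and ip :: "'a \<Rightarrow> 'a \<Rightarrow> complex"
  assumes hilbert_space: "hilbert_space sm S ip"

sublocale hilbert \<subseteq> ip_space
  using hilbert_space unfolding hilbert_space_def by unfold_locales blast+

context hilbert
begin

lemma complete: "(\<And>n. f n \<in> S) \<Longrightarrow> ip_cauchy ip f \<Longrightarrow> \<exists>l\<in>S. ip_conv ip f l"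
  using hilbert_space unfolding hilbert_space_def by blast

lemma riesz_representation_on_closure:
  assumes "linear_functional \<phi>" "\<And>x. x \<in> S \<Longrightarrow> cmod (\<phi> x) \<le> K * nrm x"
    and "D0 \<subseteq> S" "csubspace sm D0"
  obtains m where "m \<in> S" "\<forall>e>0. \<exists>d\<in>D0. nrm (m - d) < e" "\<forall>d\<in>D0. ip d m = \<phi> d"
proof -
  have "D0 \<noteq> {}"
    using assms(4) unfolding csubspace_def by blast
  then obtain \<mu> d where \<mu>_le: "\<And>x. x \<in> D0 \<Longrightarrow> \<mu> \<le> dirichlet \<phi> x"
    and d: "\<And>n. d n \<in> D0" "\<And>n. dirichlet \<phi> (d n) < \<mu> + inverse (Suc n)"
    using minimizing_sequence_exists[OF assms(2,3)] by metis
  have lim: "(\<lambda>n. dirichlet \<phi> (d n)) \<longlonglongrightarrow> \<mu>"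
  proof (rule real_tendsto_sandwich[where f = "\<lambda>_. \<mu>" and h = "\<lambda>n. \<mu> + inverse (Suc n)"])
    show "(\<lambda>n. \<mu> + inverse (real (Suc n))) \<longlonglongrightarrow> \<mu>"
      using tendsto_add[OF tendsto_const LIMSEQ_inverse_real_of_nat] by simp
  qed (use d \<mu>_le in \<open>auto intro!: always_eventually less_imp_le\<close>)
  have "ip_cauchy ip d"
    by (rule minimizing_sequence_cauchy[OF assms(1,3,4) \<mu>_le d])
  then obtain m where m: "m \<in> S" "ip_conv ip d m"
    using complete d(1) assms(3) by blast
  moreover have "\<forall>e>0. \<exists>d\<in>D0. nrm (m - d) < e"
  proof (intro allI impI)
    fix e :: real
    assume "e > 0"
    then obtain n where "nrm (d n - m) < e"
      using m(2) unfolding ip_conv_def by blast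
    then show "\<exists>d\<in>D0. nrm (m - d) < e"
      using d(1) assms(3) m(1) nrm_minus_commute by (metis subsetD)
  qed
  moreover have "\<forall>u\<in>D0. ip u m = \<phi> u"
    using minimizer_represents[where d = d, OF assms(1,3,4) \<mu>_le d(1) lim m] by blast
  ultimately show thesis
    using that by blast
qed

lemma riesz_representation:
  assumes "linear_functional \<phi>" "\<And>x. x \<in> S \<Longrightarrow> cmod (\<phi> x) \<le> K * nrm x"
  obtains m where "m \<in> S" "\<forall>x\<in>S. ip x m = \<phi> x"
  using riesz_representation_on_closure[OF assms subset_refl csubspace_carrier] by metis

lemma densely_defined_if_orthogonal_complement_trivial:
  assumes "D0 \<subseteq> S" "csubspace sm D0" "\<And>u. u \<in> S \<Longrightarrow> \<forall>d\<in>D0. ip d u = 0 \<Longrightarrow> u = 0"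
  shows "densely_defined S ip D0"
  unfolding densely_defined_def
proof (intro conjI ballI allI impI)
  fix x e
  assume x: "x \<in> S" and "(e::real) > 0"
  obtain m where m: "m \<in> S" "\<forall>e>0. \<exists>d\<in>D0. nrm (m - d) < e" "\<forall>d\<in>D0. ip d m = ip d x"
    using riesz_representation_on_closure[OF linear_functional_ip_left[OF x], of "nrm x"]
      cauchy_schwarz[OF _ x] assms(1,2) by (auto simp: mult.commute)
  have "\<forall>d\<in>D0. ip d (x - m) = 0"
    using m(1,3) x assms(1) by (auto simp: ip_diff_right)
  then have "x = m"
    using assms(3)[of "x - m"] x m(1) by simp
  then show "\<exists>d\<in>D0. nrm (x - d) < e"
    using m(2) \<open>e > 0\<close> by blast
qed (use assms(1) in blast)

end

definition prod_scale ::
  "(complex \<Rightarrow> 'a \<Rightarrow> 'a) \<Rightarrow> (complex \<Rightarrow> 'b \<Rightarrow> 'b) \<Rightarrow> complex \<Rightarrow> 'a \<times> 'b \<Rightarrow> 'a \<times> 'b" where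
  "prod_scale sm1 sm2 a z = (sm1 a (fst z), sm2 a (snd z))"

definition prod_ip ::
  "('a \<Rightarrow> 'a \<Rightarrow> complex) \<Rightarrow> ('b \<Rightarrow> 'b \<Rightarrow> complex) \<Rightarrow> 'a \<times> 'b \<Rightarrow> 'a \<times> 'b \<Rightarrow> complex" where
  "prod_ip ip1 ip2 z w = ip1 (fst z) (fst w) + ip2 (snd z) (snd w)"

locale ip_product =
  I1: ip_space sm1 S1 ip1 + I2: ip_space sm2 S2 ip2
  for sm1 :: "complex \<Rightarrow> 'a::ab_group_add \<Rightarrow> 'a" and S1 ip1
    and sm2 :: "complex \<Rightarrow> 'b::ab_group_add \<Rightarrow> 'b" and S2 ip2
begin

sublocale ip_space "prod_scale sm1 sm2" "S1 \<times> S2" "prod_ip ip1 ip2"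
proof
  show "cvector_space (prod_scale sm1 sm2)"
    using I1.cvector_space I2.cvector_space
    unfolding cvector_space_def prod_scale_def by (simp add: prod_eq_iff)
  have "csubspace (prod_scale sm1 sm2) (S1 \<times> S2)"
    unfolding csubspace_def prod_scale_def by (auto simp: zero_prod_def)
  then show "inner_product_on (prod_scale sm1 sm2) (S1 \<times> S2) (prod_ip ip1 ip2)"
    unfolding inner_product_on_def
  proof (intro conjI ballI allI impI)
    fix z w
    assume z: "z \<in> S1 \<times> S2" and w: "w \<in> S1 \<times> S2"
    show "prod_ip ip1 ip2 z w = cnj (prod_ip ip1 ip2 w z)"
      using z w I1.ip_conj[of "fst z" "fst w"] I2.ip_conj[of "snd z" "snd w"]
      by (simp add: prod_ip_def mem_Times_iff)
    show "prod_ip ip1 ip2 (prod_scale sm1 sm2 a z) w = a * prod_ip ip1 ip2 z w" for a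
      using z w by (simp add: prod_ip_def prod_scale_def mem_Times_iff I1.ip_scale_left
          I2.ip_scale_left distrib_left)
    show "prod_ip ip1 ip2 (z + w) u = prod_ip ip1 ip2 z u + prod_ip ip1 ip2 w u"
      if "u \<in> S1 \<times> S2" for u
      using z w that by (simp add: prod_ip_def mem_Times_iff I1.ip_add_left I2.ip_add_left)
  next
    fix z
    assume z: "z \<in> S1 \<times> S2"
    then have re: "Re (prod_ip ip1 ip2 z z) = I1.nrm (fst z) ^ 2 + I2.nrm (snd z) ^ 2"
      by (auto simp: prod_ip_def I1.nrm_square I2.nrm_square)
    then show "0 \<le> Re (prod_ip ip1 ip2 z z)"
      by simp
    assume "prod_ip ip1 ip2 z z = 0"
    then have "I1.nrm (fst z) = 0 \<and> I2.nrm (snd z) = 0"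
      using re by (simp add: add_nonneg_eq_0_iff)
    then show "z = 0"
      using z by (auto simp: I1.nrm_eq_0_iff I2.nrm_eq_0_iff prod_eq_iff)
  qed
qed

lemma prod_nrm:
  assumes "z \<in> S1 \<times> S2"
  shows "ipnorm (prod_ip ip1 ip2) z = sqrt (I1.nrm (fst z) ^ 2 + I2.nrm (snd z) ^ 2)"
proof -
  have "Re (prod_ip ip1 ip2 z z) = I1.nrm (fst z) ^ 2 + I2.nrm (snd z) ^ 2"
    using assms by (auto simp: prod_ip_def I1.nrm_square I2.nrm_square)
  then show ?thesis
    unfolding ipnorm_def[of "prod_ip ip1 ip2"] by simp
qed

lemma ip_conv_prod_iff:
  assumes "\<And>n. f n \<in> S1 \<times> S2" "l \<in> S1 \<times> S2"
  shows "ip_conv (prod_ip ip1 ip2) f l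
    \<longleftrightarrow> ip_conv ip1 (\<lambda>n. fst (f n)) (fst l) \<and> ip_conv ip2 (\<lambda>n. snd (f n)) (snd l)"
proof -
  define a where "a = (\<lambda>n. I1.nrm (fst (f n) - fst l))"
  define b where "b = (\<lambda>n. I2.nrm (snd (f n) - snd l))"
  have a_nonneg: "0 \<le> a n" and b_nonneg: "0 \<le> b n" for n
    using assms unfolding a_def b_def by (auto simp: mem_Times_iff I1.nrm_nonneg I2.nrm_nonneg)
  have "ip_conv (prod_ip ip1 ip2) f l \<longleftrightarrow> (\<lambda>n. sqrt (a n ^ 2 + b n ^ 2)) \<longlonglongrightarrow> 0"
    using assms by (simp add: ip_conv_iff_tendsto prod_nrm mem_Times_iff a_def b_def)
  also have "\<dots> \<longleftrightarrow> a \<longlonglongrightarrow> 0 \<and> b \<longlonglongrightarrow> 0"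
  proof safe
    assume lim: "(\<lambda>n. sqrt (a n ^ 2 + b n ^ 2)) \<longlonglongrightarrow> 0"
    show "a \<longlonglongrightarrow> 0" "b \<longlonglongrightarrow> 0"
      by (intro real_tendsto_sandwich[OF _ _ tendsto_const lim] always_eventually allI;
          simp add: a_nonneg b_nonneg real_le_rsqrt)+
  next
    assume "a \<longlonglongrightarrow> 0" "b \<longlonglongrightarrow> 0"
    from tendsto_real_sqrt[OF tendsto_add[OF tendsto_power[OF this(1), of 2]
        tendsto_power[OF this(2), of 2]]]
    show "(\<lambda>n. sqrt (a n ^ 2 + b n ^ 2)) \<longlonglongrightarrow> 0"
      by simp
  qed
  finally show ?thesis
    using assms by (simp add: I1.ip_conv_iff_tendsto I2.ip_conv_iff_tendsto mem_Times_iff a_def b_def)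
qed

lemma densely_defined_Times:
  assumes "densely_defined S1 ip1 D1" "densely_defined S2 ip2 D2"
  shows "densely_defined (S1 \<times> S2) (prod_ip ip1 ip2) (D1 \<times> D2)"
  unfolding densely_defined_def
proof (intro conjI ballI allI impI)
  show "D1 \<times> D2 \<subseteq> S1 \<times> S2"
    using assms unfolding densely_defined_def by blast
  fix z and e :: real
  assume z: "z \<in> S1 \<times> S2" and "e > 0"
  then obtain d1 d2 where d: "d1 \<in> D1" "I1.nrm (fst z - d1) < e / 2" "d2 \<in> D2" "I2.nrm (snd z - d2) < e / 2"
    using assms unfolding densely_defined_def by (metis half_gt_zero mem_Times_iff)
  then have "z - (d1, d2) \<in> S1 \<times> S2"
    using z assms unfolding densely_defined_def by (auto simp: mem_Times_iff)
  then have "ipnorm (prod_ip ip1 ip2) (z - (d1, d2)) \<le> I1.nrm (fst z - d1) + I2.nrm (snd z - d2)"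
    by (simp add: prod_nrm sqrt_sum_squares_le_sum I1.nrm_nonneg I2.nrm_nonneg mem_Times_iff)
  then show "\<exists>d\<in>D1 \<times> D2. ipnorm (prod_ip ip1 ip2) (z - d) < e"
    using d by force
qed

end

section \<open>The energy space of a coercive closed operator\<close>

locale coercive_operator =
  X: hilbert smX "UNIV :: 'x::ab_group_add set" ipX + Y: hilbert smY "UNIV :: 'y::ab_group_add set" ipY
  for smX ipX smY ipY +
  fixes DA :: "'x set" and A :: "'x \<Rightarrow> 'y" and c :: real
  assumes A_linear: "linear_operator smX UNIV smY UNIV DA A"
    and A_closed: "closed_operator UNIV ipX UNIV ipY DA A"
    and c_pos: "c > 0"
    and A_coercive: "\<forall>x\<in>DA. ipnorm ipY (A x) \<ge> c * ipnorm ipX x"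
begin

lemma DA_subspace: "csubspace smX DA"
  using A_linear unfolding linear_operator_def by blast

lemma DA_diff: "x \<in> DA \<Longrightarrow> y \<in> DA \<Longrightarrow> x - y \<in> DA"
  using csubspace_diff[OF X.cvector_space DA_subspace] .

lemma A_zero [simp]: "A 0 = 0"
  using linear_operator_zero[OF A_linear] .

lemma A_diff: "x \<in> DA \<Longrightarrow> y \<in> DA \<Longrightarrow> A (x - y) = A x - A y"
  using linear_operator_diff[OF X.cvector_space A_linear] .

definition energy_ip :: "'x \<Rightarrow> 'x \<Rightarrow> complex" where
  "energy_ip x y = ipY (A x) (A y)"

lemma energy_nrm: "ipnorm energy_ip x = Y.nrm (A x)"
  by (simp add: ipnorm_def energy_ip_def)

lemma nrm_le_energy_nrm: "x \<in> DA \<Longrightarrow> X.nrm x \<le> ipnorm energy_ip x / c"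
  using A_coercive c_pos by (simp add: energy_nrm field_simps mult.commute)

lemma inner_product_energy: "inner_product_on smX DA energy_ip"
  unfolding inner_product_on_def
proof (intro conjI ballI allI impI DA_subspace)
  fix x y
  assume x: "x \<in> DA" and y: "y \<in> DA"
  show "energy_ip x y = cnj (energy_ip y x)"
    unfolding energy_ip_def by (rule Y.ip_conj) simp_all
  show "energy_ip (smX a x) y = a * energy_ip x y" for a
    using A_linear x unfolding linear_operator_def energy_ip_def by (simp add: Y.ip_scale_left)
  show "energy_ip (x + y) z = energy_ip x z + energy_ip y z" if "z \<in> DA" for z
    using A_linear x y unfolding linear_operator_def energy_ip_def by (simp add: Y.ip_add_left)
next
  fix x
  assume x: "x \<in> DA"
  show "0 \<le> Re (energy_ip x x)"
    unfolding energy_ip_def by (rule Y.ip_self_nonneg) simp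
  assume "energy_ip x x = 0"
  then have "ipnorm energy_ip x = 0"
    by (simp add: ipnorm_def)
  then have "X.nrm x = 0"
    using nrm_le_energy_nrm[OF x] X.nrm_nonneg[of x] by simp
  then show "x = 0"
    using X.nrm_eq_0_iff by simp
qed

lemma ip_conv_energy_iff:
  assumes "\<And>n. f n \<in> DA" "x \<in> DA"
  shows "ip_conv energy_ip f x \<longleftrightarrow> ip_conv ipY (\<lambda>n. A (f n)) (A x)"
  using assms by (simp add: ip_conv_def energy_nrm A_diff)

lemma ip_conv_energy_imp_ip_conv:
  assumes "\<And>n. f n \<in> DA" "x \<in> DA" "ip_conv energy_ip f x"
  shows "ip_conv ipX f x"
proof (rule ip_conv_dominated[OF assms(3)])
  show "X.nrm (f n - x) \<le> 1 / c * ipnorm energy_ip (f n - x)" for n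
    using nrm_le_energy_nrm[OF DA_diff[OF assms(1,2)]] by simp
qed (use c_pos in simp)

lemma hilbert_energy: "hilbert_space smX DA energy_ip"
  unfolding hilbert_space_def
proof (intro conjI allI impI X.cvector_space inner_product_energy, elim conjE)
  fix f
  assume f: "\<forall>n. f n \<in> DA" and cauchy: "ip_cauchy energy_ip f"
  then have "ip_cauchy ipY (\<lambda>n. A (f n))"
    by (simp add: ip_cauchy_def energy_nrm A_diff)
  then obtain y where y: "ip_conv ipY (\<lambda>n. A (f n)) y"
    using Y.complete by blast
  have "ip_cauchy ipX f"
  proof (rule ip_cauchy_dominated[OF cauchy])
    show "X.nrm (f m - f n) \<le> 1 / c * ipnorm energy_ip (f m - f n)" for m n
      using nrm_le_energy_nrm[OF DA_diff] f by simp
  qed (use c_pos in simp)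
  then obtain x where "ip_conv ipX f x"
    using X.complete by blast
  then have "x \<in> DA" "A x = y"
    using A_closed f y unfolding closed_operator_def by blast+
  then show "\<exists>l\<in>DA. ip_conv energy_ip f l"
    using y f ip_conv_energy_iff by blast
qed

sublocale H: hilbert smX DA energy_ip
  by (rule hilbert.intro[OF hilbert_energy])

lemma energy_riesz: "\<exists>r\<in>DA. \<forall>y\<in>DA. energy_ip y r = ipX y u"
proof -
  have "cmod (ipX y u) \<le> X.nrm u / c * H.nrm y" if "y \<in> DA" for y
  proof -
    have "cmod (ipX y u) \<le> X.nrm y * X.nrm u"
      by (rule X.cauchy_schwarz) simp_all
    also have "\<dots> \<le> H.nrm y / c * X.nrm u"
      using nrm_le_energy_nrm[OF that] X.nrm_nonneg[of u] by (intro mult_right_mono) auto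
    finally show ?thesis
      by (simp add: field_simps)
  qed
  moreover have "H.linear_functional (\<lambda>y. ipX y u)"
    by (simp add: H.linear_functional_def X.ip_add_left X.ip_scale_left)
  ultimately show ?thesis
    using H.riesz_representation by metis
qed

end

section \<open>The first-order operator\<close>

locale first_order_system = coercive_operator smX ipX smY ipY DA A c
  for smX :: "complex \<Rightarrow> 'x::ab_group_add \<Rightarrow> 'x" and ipX
    and smY :: "complex \<Rightarrow> 'y::ab_group_add \<Rightarrow> 'y" and ipY and DA A c +
  fixes DB :: "'y set" and B :: "'y \<Rightarrow> 'x"
  assumes A_dense: "densely_defined UNIV ipX DA"
    and B_linear: "linear_operator smY UNIV smX UNIV DB B"
    and B_closed: "closed_operator UNIV ipY UNIV ipX DB B"
    and adjoint_A_subset: "op_incl (adj_dom UNIV ipX UNIV ipY DA A) (adj_fun UNIV ipX UNIV ipY DA A)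
      DB (\<lambda>y. - B y)"
begin

lemma B_zero [simp]: "B 0 = 0"
  using linear_operator_zero[OF B_linear] .

lemma B_if_adjoint:
  assumes "\<forall>x\<in>DA. ipY (A x) y = ipX x z"
  shows "y \<in> DB" "B y = - z"
proof -
  have "y \<in> adj_dom UNIV ipX UNIV ipY DA A"
    unfolding adj_dom_def using assms by blast
  moreover have "adj_fun UNIV ipX UNIV ipY DA A y = z"
    using X.adj_fun_eqI[OF A_dense, where ip' = ipY and T = A and y = y and z = z] assms by blast
  ultimately show "y \<in> DB" "B y = - z"
    using adjoint_A_subset unfolding op_incl_def by auto
qed

lemma energy_riesz_B:
  obtains r where "r \<in> DA" "A r \<in> DB" "B (A r) = - u" "\<forall>y\<in>DA. energy_ip y r = ipX y u"
  using energy_riesz[of u] B_if_adjoint unfolding energy_ip_def by metis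

definition dom_BA :: "'x set" where
  "dom_BA = {x \<in> DA. A x \<in> DB}"

lemma dom_BA_subspace: "csubspace smX dom_BA"
  using DA_subspace B_linear A_linear unfolding dom_BA_def csubspace_def linear_operator_def by auto

lemma dom_BA_dense: "densely_defined DA energy_ip dom_BA"
proof (rule H.densely_defined_if_orthogonal_complement_trivial[OF _ dom_BA_subspace])
  show "dom_BA \<subseteq> DA"
    unfolding dom_BA_def by blast
  fix u
  assume u: "u \<in> DA" "\<forall>d\<in>dom_BA. energy_ip d u = 0"
  obtain r where r: "r \<in> DA" "A r \<in> DB" "\<forall>y\<in>DA. energy_ip y r = ipX y u"
    using energy_riesz_B by metis
  then have "energy_ip r u = 0"
    using u(2) unfolding dom_BA_def by blast
  then have "ipX u u = 0"
    using r(1,3) u(1) H.ip_conj[of u r] by simp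
  then show "u = 0"
    using X.ip_self_eq_0_imp by simp
qed

sublocale Z: ip_product smX DA energy_ip smX UNIV ipX ..

(* The operator of the first-order system on Z_h = X_h \<times> X; its domain is dom_BA \<times> DA. *)
definition cA :: "'x \<times> 'x \<Rightarrow> 'x \<times> 'x" where
  "cA z = (snd z, B (A (fst z)))"

abbreviation ipZ :: "'x \<times> 'x \<Rightarrow> 'x \<times> 'x \<Rightarrow> complex" where
  "ipZ \<equiv> prod_ip energy_ip ipX"

lemma cA_densely_defined: "densely_defined (DA \<times> UNIV) ipZ (dom_BA \<times> DA)"
  by (rule Z.densely_defined_Times[OF dom_BA_dense A_dense])

lemma cA_closed: "closed_operator (DA \<times> UNIV) ipZ (DA \<times> UNIV) ipZ (dom_BA \<times> DA) cA"
  unfolding closed_operator_def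
proof (intro allI impI, elim conjE)
  fix f x y
  assume f: "\<forall>n. f n \<in> dom_BA \<times> DA" and x: "x \<in> DA \<times> UNIV" and y: "y \<in> DA \<times> UNIV"
    and conv_x: "ip_conv ipZ f x" and conv_y: "ip_conv ipZ (\<lambda>n. cA (f n)) y"
  have f1: "fst (f n) \<in> DA" "A (fst (f n)) \<in> DB" and f2: "snd (f n) \<in> DA" for n
    using f unfolding dom_BA_def by (auto simp: mem_Times_iff)
  have x1: "fst x \<in> DA" and y1: "fst y \<in> DA"
    using x y by auto
  have "ip_conv energy_ip (\<lambda>n. fst (f n)) (fst x)" "ip_conv ipX (\<lambda>n. snd (f n)) (snd x)"
    using conv_x Z.ip_conv_prod_iff x f1 f2 by (auto simp: mem_Times_iff)
  moreover have "ip_conv energy_ip (\<lambda>n. snd (f n)) (fst y)"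
    and conv_B: "ip_conv ipX (\<lambda>n. B (A (fst (f n)))) (snd y)"
    using conv_y Z.ip_conv_prod_iff[of "\<lambda>n. cA (f n)" y] y f2 by (auto simp: cA_def mem_Times_iff)
  ultimately have "fst y = snd x" and conv_A: "ip_conv ipY (\<lambda>n. A (fst (f n))) (A (fst x))"
    using X.ip_conv_unique ip_conv_energy_imp_ip_conv[where f = "\<lambda>n. snd (f n)", OF f2 y1]
      ip_conv_energy_iff[where f = "\<lambda>n. fst (f n)", OF f1(1) x1]
    by auto
  moreover have "A (fst x) \<in> DB \<and> B (A (fst x)) = snd y"
    using B_closed[unfolded closed_operator_def, rule_format, of "\<lambda>n. A (fst (f n))"]
      f1(2) conv_A conv_B
    by blast
  ultimately show "x \<in> dom_BA \<times> DA \<and> cA x = y"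
    using x1 y1 unfolding dom_BA_def cA_def by (auto simp: mem_Times_iff prod_eq_iff)
qed

lemma adjoint_cA_fst:
  assumes w: "w \<in> DA \<times> UNIV" and v: "v \<in> DA \<times> UNIV"
    and adj: "\<forall>z\<in>dom_BA \<times> DA. ipZ (cA z) w = ipZ z v"
  shows "A (fst w) \<in> DB" "B (A (fst w)) = - snd v"
proof -
  have "0 \<in> dom_BA"
    using dom_BA_subspace unfolding csubspace_def by blast
  then have "ipY (A x) (A (fst w)) = ipX x (snd v)" if "x \<in> DA" for x
    using adj[rule_format, of "(0, x)"] that w v by (auto simp: cA_def prod_ip_def energy_ip_def)
  then show "A (fst w) \<in> DB" "B (A (fst w)) = - snd v"
    using B_if_adjoint by blast+
qed

lemma adjoint_cA_snd:
  assumes w: "w \<in> DA \<times> UNIV" and v: "v \<in> DA \<times> UNIV"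
    and adj: "\<forall>z\<in>dom_BA \<times> DA. ipZ (cA z) w = ipZ z v"
  shows "snd w = - fst v"
proof -
  define u where "u = snd w + fst v"
  obtain r where r: "r \<in> DA" "A r \<in> DB" "B (A r) = - u" "\<forall>y\<in>DA. energy_ip y r = ipX y u"
    using energy_riesz_B by metis
  have v1: "fst v \<in> DA"
    using v by auto
  have "(r, 0) \<in> dom_BA \<times> DA"
    using r(1,2) DA_subspace unfolding dom_BA_def csubspace_def by simp
  then have "- ipX u (snd w) = energy_ip r (fst v)"
    using adj[rule_format, of "(r, 0)"] r(3) v1
    by (simp add: cA_def prod_ip_def energy_ip_def X.ip_minus_left)
  also have "\<dots> = cnj (ipX (fst v) u)"
    using H.ip_conj[of r "fst v"] r(1,4) v1 by simp
  also have "\<dots> = ipX u (fst v)"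
    using X.ip_conj[of u "fst v"] by simp
  finally have "ipX u (snd w) + ipX u (fst v) = 0"
    by (simp add: neg_eq_iff_add_eq_0)
  then have "ipX u u = 0"
    using X.ip_add_right[of u "snd w" "fst v"] by (simp add: u_def[symmetric])
  then show "snd w = - fst v"
    using X.ip_self_eq_0_imp[of u] unfolding u_def by (simp add: add_eq_0_iff2)
qed

lemma adjoint_cA_subset_minus_cA:
  "op_incl (adj_dom (DA \<times> UNIV) ipZ (DA \<times> UNIV) ipZ (dom_BA \<times> DA) cA)
     (adj_fun (DA \<times> UNIV) ipZ (DA \<times> UNIV) ipZ (dom_BA \<times> DA) cA) (dom_BA \<times> DA) (\<lambda>z. - cA z)"
proof -
  have "w \<in> dom_BA \<times> DA \<and> adj_fun (DA \<times> UNIV) ipZ (DA \<times> UNIV) ipZ (dom_BA \<times> DA) cA w = - cA w"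
    if w_adj: "w \<in> adj_dom (DA \<times> UNIV) ipZ (DA \<times> UNIV) ipZ (dom_BA \<times> DA) cA" for w
  proof -
    obtain v where w: "w \<in> DA \<times> UNIV" and v: "v \<in> DA \<times> UNIV"
      and adj: "\<forall>z\<in>dom_BA \<times> DA. ipZ (cA z) w = ipZ z v"
      using w_adj unfolding adj_dom_def by blast
    have "adj_fun (DA \<times> UNIV) ipZ (DA \<times> UNIV) ipZ (dom_BA \<times> DA) cA w = v"
      by (rule Z.adj_fun_eqI[where ip' = ipZ and T = cA and y = w, OF cA_densely_defined v adj])
    moreover have "w \<in> dom_BA \<times> DA" "v = - cA w"
      using adjoint_cA_fst[OF w v adj] adjoint_cA_snd[OF w v adj] w v
      unfolding dom_BA_def cA_def by (auto simp: mem_Times_iff prod_eq_iff)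
    ultimately show ?thesis
      by simp
  qed
  then show ?thesis
    unfolding op_incl_def by blast
qed

lemma cAs_subset_cA:
  "op_incl {z \<in> DA \<times> DA. A (fst z) \<in> adj_dom UNIV ipX UNIV ipY DA A}
     (\<lambda>z. (snd z, - adj_fun UNIV ipX UNIV ipY DA A (A (fst z)))) (dom_BA \<times> DA) cA"
  using adjoint_A_subset unfolding op_incl_def dom_BA_def cA_def by auto

end

theorem lemma3p2:
  fixes smX :: "complex \<Rightarrow> 'x::ab_group_add \<Rightarrow> 'x" and ipX :: "'x \<Rightarrow> 'x \<Rightarrow> complex"
    and smY :: "complex \<Rightarrow> 'y::ab_group_add \<Rightarrow> 'y" and ipY :: "'y \<Rightarrow> 'y \<Rightarrow> complex"
    and DA :: "'x set" and A :: "'x \<Rightarrow> 'y" and DB :: "'y set" and B :: "'y \<Rightarrow> 'x"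
    and c :: real
  assumes HX: "hilbert_space smX UNIV ipX"
    and HY: "hilbert_space smY UNIV ipY"
    and A_lin: "linear_operator smX UNIV smY UNIV DA A"
    and A_dense: "densely_defined UNIV ipX DA"
    and A_closed: "closed_operator UNIV ipX UNIV ipY DA A"
    and c_pos: "c > 0"
    and A_coercive: "\<forall>x\<in>DA. ipnorm ipY (A x) \<ge> c * ipnorm ipX x"
    and B_lin: "linear_operator smY UNIV smX UNIV DB B"
    and B_dense: "densely_defined UNIV ipY DB"
    and B_closed: "closed_operator UNIV ipY UNIV ipX DB B"
    and AB: "op_incl (adj_dom UNIV ipX UNIV ipY DA A) (adj_fun UNIV ipX UNIV ipY DA A)
               DB (\<lambda>y. - B y)"
  defines "Zh \<equiv> DA \<times> (UNIV :: 'x set)"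
    and "ipZ \<equiv> \<lambda>z w. ipY (A (fst z)) (A (fst w)) + ipX (snd z) (snd w)"
    and "DcA \<equiv> {z \<in> DA \<times> DA. A (fst z) \<in> DB}"
    and "cA \<equiv> \<lambda>z. (snd z, B (A (fst z)))"
    and "DcAs \<equiv> {z \<in> DA \<times> DA. A (fst z) \<in> adj_dom UNIV ipX UNIV ipY DA A}"
    and "cAs \<equiv> \<lambda>z. (snd z, - adj_fun UNIV ipX UNIV ipY DA A (A (fst z)))"
  shows "densely_defined Zh ipZ DcA
    \<and> closed_operator Zh ipZ Zh ipZ DcA cA
    \<and> op_incl DcAs cAs DcA cA
    \<and> op_incl (adj_dom Zh ipZ Zh ipZ DcA cA) (adj_fun Zh ipZ Zh ipZ DcA cA) DcA (\<lambda>z. - cA z)"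
proof -
  (* B_dense is redundant: dom B contains the domain of A^*, which is dense because A is closed. *)
  interpret S: first_order_system smX ipX smY ipY DA A c DB B
    by unfold_locales (fact HX HY A_lin A_closed c_pos A_coercive A_dense B_lin B_closed AB)+
  have "ipZ = prod_ip S.energy_ip ipX"
    unfolding ipZ_def prod_ip_def S.energy_ip_def by simp
  moreover have "DcA = S.dom_BA \<times> DA"
    unfolding DcA_def S.dom_BA_def by auto
  moreover have "cA = S.cA"
    unfolding cA_def S.cA_def by simp
  ultimately show ?thesis
    using S.cA_densely_defined S.cA_closed S.cAs_subset_cA S.adjoint_cA_subset_minus_cA
    unfolding Zh_def DcAs_def cAs_def by simp
qed

end
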